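(* Let $(R,\mathfrak m)$ be a regular local ring with $\dim R\ge 2$, let $\{(R_i,\mathfrak m_i)\}_{i\ge 0}$ be an infinite sequence of local quadratic transforms with $R_0=R$, and let $S=\bigcup_{i\ge0}R_i$ with maximal ideal $N=\bigcup_i\mathfrak m_i$. The following are equivalent: (1) $N$ is not a principal ideal of $S$; (2) $N=N^2$; (3) $\{R_i\}$ changes directions infinitely many times; (4) for every nonzero element $x\in N$ and every $n>0$, $\mathrm{ord}_i(x)>n$ for all $i\gg0$.
   Context: A local quadratic transform of a regular local ring $(A,\mathfrak n)$ is a local ring $A[\mathfrak n/y]_{\mathfrak q}$ with $y\in\mathfrak n\setminus\mathfrak n^2$ and $\mathfrak q$ a prime ideal of $A[\mathfrak n/y]$ containing $\mathfrak n$. The sequence satisfies: for each $i\ge 0$, $R_{i+1}$ is a local quadratic transform of $R_i$, $R_i\subsetneq R_{i+1}$, and each $R_i$ is a regular local ring of dimension at least $2$ with maximal ideal $\mathfrak m_i$. $\mathrm{ord}_i$ is the order valuation of $R_i$: $\mathrm{ord}_i(a)=\max\{n: a\in\mathfrak m_i^n\}$ for $0\ne a\in R_i$, extended to the quotient field by $\mathrm{ord}_i(a/b)=\mathrm{ord}_i(a)-\mathrm{ord}_i(b)$. For $n>i$, there is a change of direction between $R_i$ and $R_n$ if $\mathfrak m_i\subseteq\mathfrak m_n^2$. The sequence $\{R_i\}$ changes directions infinitely many times if there are infinitely many $i$ such that there is a change of direction between $R_i$ and $R_{n_i}$ for some $n_i>i$. *)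

theory Defs
  imports Main
begin

text \<open>All rings are subrings of a common ambient field of type 'a (all rings in
  a sequence of local quadratic transforms are birational, i.e. live in one field).\<close>

definition is_subring :: "'a::field set \<Rightarrow> bool" where
  "is_subring S \<longleftrightarrow> 0 \<in> S \<and> 1 \<in> S \<and>
     (\<forall>a\<in>S. \<forall>b\<in>S. a + b \<in> S \<and> a - b \<in> S \<and> a * b \<in> S)"

definition is_ideal :: "'a::field set \<Rightarrow> 'a set \<Rightarrow> bool" where
  "is_ideal I S \<longleftrightarrow> is_subring S \<and> I \<subseteq> S \<and> 0 \<in> I \<and>
     (\<forall>a\<in>I. \<forall>b\<in>I. a + b \<in> I) \<and> (\<forall>s\<in>S. \<forall>a\<in>I. s * a \<in> I)"

definition is_prime_ideal :: "'a::field set \<Rightarrow> 'a set \<Rightarrow> bool" where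
  "is_prime_ideal P S \<longleftrightarrow> is_ideal P S \<and> P \<noteq> S \<and>
     (\<forall>a\<in>S. \<forall>b\<in>S. a * b \<in> P \<longrightarrow> a \<in> P \<or> b \<in> P)"

definition ideal_gen :: "'a::field set \<Rightarrow> 'a set \<Rightarrow> 'a set" where
  "ideal_gen S G = {(\<Sum>g\<in>F. c g * g) | F c. finite F \<and> F \<subseteq> G \<and> (\<forall>g\<in>F. c g \<in> S)}"

fun ideal_pow :: "'a::field set \<Rightarrow> 'a set \<Rightarrow> nat \<Rightarrow> 'a set" where
  "ideal_pow S I 0 = S"
| "ideal_pow S I (Suc k) = ideal_gen S {a * b | a b. a \<in> ideal_pow S I k \<and> b \<in> I}"

definition noetherian :: "'a::field set \<Rightarrow> bool" where
  "noetherian S \<longleftrightarrow> is_subring S \<and>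
     (\<forall>I. is_ideal I S \<longrightarrow> (\<exists>G. finite G \<and> G \<subseteq> S \<and> I = ideal_gen S G))"

definition local_ring :: "'a::field set \<Rightarrow> 'a set \<Rightarrow> bool" where
  "local_ring S m \<longleftrightarrow> is_ideal m S \<and> m \<noteq> S \<and> (\<forall>x\<in>S - m. inverse x \<in> S)"

definition has_prime_chain :: "'a::field set \<Rightarrow> nat \<Rightarrow> bool" where
  "has_prime_chain S n \<longleftrightarrow> (\<exists>P :: nat \<Rightarrow> 'a set.
     (\<forall>k\<le>n. is_prime_ideal (P k) S) \<and> (\<forall>k<n. P k \<subset> P (Suc k)))"

definition krull_dim_eq :: "'a::field set \<Rightarrow> nat \<Rightarrow> bool" where
  "krull_dim_eq S d \<longleftrightarrow> has_prime_chain S d \<and> \<not> has_prime_chain S (Suc d)"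

definition regular_local_ring :: "'a::field set \<Rightarrow> 'a set \<Rightarrow> bool" where
  "regular_local_ring S m \<longleftrightarrow> noetherian S \<and> local_ring S m \<and>
     (\<exists>d. krull_dim_eq S d \<and>
        (\<exists>G. finite G \<and> card G \<le> d \<and> G \<subseteq> S \<and> m = ideal_gen S G))"

definition subring_gen :: "'a::field set \<Rightarrow> 'a set" where
  "subring_gen X = \<Inter>{T. is_subring T \<and> X \<subseteq> T}"

definition localize :: "'a::field set \<Rightarrow> 'a set \<Rightarrow> 'a set" where
  "localize C q = {a / b | a b. a \<in> C \<and> b \<in> C \<and> b \<notin> q}"

definition local_quadratic_transform :: "'a::field set \<Rightarrow> 'a set \<Rightarrow> 'a set \<Rightarrow> bool" where
  "local_quadratic_transform A n B \<longleftrightarrow>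
     (\<exists>y \<in> n - ideal_pow A n 2. \<exists>q.
        is_prime_ideal q (subring_gen (A \<union> (\<lambda>x. x / y) ` n)) \<and> n \<subseteq> q \<and>
        B = localize (subring_gen (A \<union> (\<lambda>x. x / y) ` n)) q)"

definition ord_val :: "'a::field set \<Rightarrow> 'a set \<Rightarrow> 'a \<Rightarrow> nat" where
  "ord_val S m a = (GREATEST n. a \<in> ideal_pow S m n)"

end

theory Submission
  imports Defs "HOL-Library.Infinite_Set"
begin

text \<open>If the sequence changes directions infinitely often, every element of m_i lies in m_n^2 for
  some later n; this gives N = N^2, and iterating it pushes the order of every nonzero element to
  infinity. If it changes directions only finitely often, take i0 after the last change and x with
  m_i0 R_(i0+1) = x R_(i0+1). Then x is not in m_n^2 for any n > i0, so x/y is a unit of R_(n+1)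
  whenever m_n R_(n+1) = y R_(n+1); hence N = x S is principal and ord_n(x) = 1 for n > i0.
  Finally a principal N = x S with x nonzero cannot equal N^2 = x^2 S, since x is not a unit.\<close>

text \<open>\<open>J\<close> need not lie in \<open>S\<close>: sets of the form \<open>{z. z * c \<in> T}\<close> are submodules in this sense.\<close>

definition is_submodule :: "'a::field set \<Rightarrow> 'a set \<Rightarrow> bool" where
  "is_submodule J S \<longleftrightarrow> 0 \<in> J \<and> (\<forall>a\<in>J. \<forall>b\<in>J. a + b \<in> J) \<and> (\<forall>s\<in>S. \<forall>a\<in>J. s * a \<in> J)"

lemma is_submodule_ideal: "is_ideal I S \<Longrightarrow> is_submodule I S"
  unfolding is_ideal_def is_submodule_def by blast

lemma is_submodule_subring: "is_subring S \<Longrightarrow> is_submodule S S"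
  unfolding is_subring_def is_submodule_def by blast

lemma is_submodule_scaled:
  assumes "is_subring T" "S \<subseteq> T"
  shows "is_submodule {z. z * c \<in> T} S"
  using assms unfolding is_subring_def is_submodule_def
  by (auto simp: distrib_right mult.assoc)

lemma power_mem_subring: "is_subring T \<Longrightarrow> y \<in> T \<Longrightarrow> y ^ n \<in> T"
  by (induction n) (auto simp: is_subring_def)

lemma ideal_gen_least:
  assumes "is_submodule J S" "H \<subseteq> J"
  shows "ideal_gen S H \<subseteq> J"
proof
  fix z assume "z \<in> ideal_gen S H"
  then obtain F c where z: "z = (\<Sum>g\<in>F. c g * g)" "finite F" "F \<subseteq> H" "\<forall>g\<in>F. c g \<in> S"
    unfolding ideal_gen_def by blast
  have "(\<Sum>g\<in>F. c g * g) \<in> J"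
    using z(2-4) by (induction F rule: finite_induct) (use assms in \<open>auto simp: is_submodule_def\<close>)
  then show "z \<in> J" using z(1) by simp
qed

lemma ideal_gen_mono: "S \<subseteq> S' \<Longrightarrow> G \<subseteq> G' \<Longrightarrow> ideal_gen S G \<subseteq> ideal_gen S' G'"
  unfolding ideal_gen_def by blast

lemma sum_mem_ideal_gen:
  "finite F \<Longrightarrow> F \<subseteq> G \<Longrightarrow> \<forall>g\<in>F. c g \<in> S \<Longrightarrow> (\<Sum>g\<in>F. c g * g) \<in> ideal_gen S G"
  unfolding ideal_gen_def by blast

lemma zero_mem_ideal_gen: "0 \<in> ideal_gen S G"
  unfolding ideal_gen_def by (rule CollectI, rule exI[of _ "{}"]) auto

lemma generator_mem_ideal_gen: "1 \<in> S \<Longrightarrow> g \<in> G \<Longrightarrow> g \<in> ideal_gen S G"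
  unfolding ideal_gen_def
  by (rule CollectI, rule exI[of _ "{g}"], rule exI[of _ "\<lambda>_. 1"]) auto

lemma is_submodule_ideal_gen:
  assumes S: "is_subring S"
  shows "is_submodule (ideal_gen S G) S"
  unfolding is_submodule_def
proof (intro conjI ballI)
  show "0 \<in> ideal_gen S G" by (rule zero_mem_ideal_gen)
next
  fix a b assume "a \<in> ideal_gen S G" "b \<in> ideal_gen S G"
  then obtain F1 c1 F2 c2
    where a: "a = (\<Sum>g\<in>F1. c1 g * g)" "finite F1" "F1 \<subseteq> G" "\<forall>g\<in>F1. c1 g \<in> S"
      and b: "b = (\<Sum>g\<in>F2. c2 g * g)" "finite F2" "F2 \<subseteq> G" "\<forall>g\<in>F2. c2 g \<in> S"
    unfolding ideal_gen_def by blast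
  define c where "c g = (if g \<in> F1 then c1 g else 0) + (if g \<in> F2 then c2 g else 0)" for g
  have "(\<Sum>g\<in>F1 \<union> F2. (if g \<in> F1 then c1 g else 0) * g) = a"
    unfolding a(1) using a(2) b(2) by (subst sum.mono_neutral_right[of "F1 \<union> F2" F1]) auto
  moreover have "(\<Sum>g\<in>F1 \<union> F2. (if g \<in> F2 then c2 g else 0) * g) = b"
    unfolding b(1) using a(2) b(2) by (subst sum.mono_neutral_right[of "F1 \<union> F2" F2]) auto
  ultimately have "a + b = (\<Sum>g\<in>F1 \<union> F2. c g * g)"
    unfolding c_def distrib_right sum.distrib by simp
  moreover have "(\<Sum>g\<in>F1 \<union> F2. c g * g) \<in> ideal_gen S G"
    using a(2-4) b(2-4) S unfolding is_subring_def c_def by (intro sum_mem_ideal_gen) auto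
  ultimately show "a + b \<in> ideal_gen S G" by simp
next
  fix s a assume s: "s \<in> S" and "a \<in> ideal_gen S G"
  then obtain F c where a: "a = (\<Sum>g\<in>F. c g * g)" "finite F" "F \<subseteq> G" "\<forall>g\<in>F. c g \<in> S"
    unfolding ideal_gen_def by blast
  have "s * a = (\<Sum>g\<in>F. (s * c g) * g)"
    unfolding a(1) by (simp add: sum_distrib_left mult.assoc)
  moreover have "(\<Sum>g\<in>F. (s * c g) * g) \<in> ideal_gen S G"
    using a(2-4) s S unfolding is_subring_def by (intro sum_mem_ideal_gen) auto
  ultimately show "s * a \<in> ideal_gen S G" by simp
qed

lemma ideal_gen_singleton:
  assumes S: "is_subring S"
  shows "ideal_gen S {x} = {c * x | c. c \<in> S}"
proof
  have "is_submodule {c * x | c. c \<in> S} S"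
    unfolding is_submodule_def
  proof (intro conjI ballI)
    show "0 \<in> {c * x | c. c \<in> S}"
      using S unfolding is_subring_def by force
  next
    fix a b assume "a \<in> {c * x | c. c \<in> S}" "b \<in> {c * x | c. c \<in> S}"
    then obtain c d where "c \<in> S" "d \<in> S" "a = c * x" "b = d * x" by blast
    moreover from this have "a + b = (c + d) * x" "c + d \<in> S"
      using S unfolding is_subring_def by (simp_all add: distrib_right)
    ultimately show "a + b \<in> {c * x | c. c \<in> S}" by blast
  next
    fix s a assume "s \<in> S" "a \<in> {c * x | c. c \<in> S}"
    then obtain c where "c \<in> S" "a = c * x" by blast
    moreover from this have "s * a = (s * c) * x" "s * c \<in> S"
      using S \<open>s \<in> S\<close> unfolding is_subring_def by (simp_all add: mult.assoc)
    ultimately show "s * a \<in> {c * x | c. c \<in> S}" by blast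
  qed
  moreover have "x \<in> {c * x | c. c \<in> S}"
    using S unfolding is_subring_def by force
  ultimately show "ideal_gen S {x} \<subseteq> {c * x | c. c \<in> S}"
    by (simp add: ideal_gen_least)
  show "{c * x | c. c \<in> S} \<subseteq> ideal_gen S {x}"
    using is_submodule_ideal_gen[OF S] generator_mem_ideal_gen[of S x "{x}"] S
    unfolding is_submodule_def is_subring_def by blast
qed

lemma ideal_pow_two: "ideal_pow S I 2 = ideal_gen S {a * b |a b. a \<in> ideal_pow S I 1 \<and> b \<in> I}"
  by (simp add: numeral_2_eq_2)

lemma ideal_pow_Suc_mono:
  assumes "ideal_pow S I k \<subseteq> ideal_pow S' I' k'" "S \<subseteq> S'" "I \<subseteq> I'"
  shows "ideal_pow S I (Suc k) \<subseteq> ideal_pow S' I' (Suc k')"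
proof -
  have "{a * b |a b. a \<in> ideal_pow S I k \<and> b \<in> I} \<subseteq> {a * b |a b. a \<in> ideal_pow S' I' k' \<and> b \<in> I'}"
    using assms(1,3) by blast
  then show ?thesis unfolding ideal_pow.simps(2) by (rule ideal_gen_mono[OF assms(2)])
qed

lemma ideal_pow_mono:
  assumes "S \<subseteq> S'" "I \<subseteq> I'"
  shows "ideal_pow S I k \<subseteq> ideal_pow S' I' k"
proof (induction k)
  case 0
  show ?case using assms(1) by simp
next
  case (Suc k)
  from Suc assms show ?case by (rule ideal_pow_Suc_mono)
qed

lemma is_submodule_ideal_pow: "is_subring S \<Longrightarrow> is_submodule (ideal_pow S I k) S"
  by (cases k) (simp_all add: is_submodule_subring is_submodule_ideal_gen)

lemma ideal_pow_one_subset: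
  assumes "is_submodule I S"
  shows "ideal_pow S I 1 \<subseteq> I"
proof -
  have "{a * b |a b. a \<in> S \<and> b \<in> I} \<subseteq> I"
    using assms unfolding is_submodule_def by blast
  then show ?thesis using ideal_gen_least[OF assms] by simp
qed

lemma subset_ideal_pow_one:
  assumes "1 \<in> S"
  shows "I \<subseteq> ideal_pow S I 1"
proof
  fix x assume "x \<in> I"
  then have "x \<in> {a * b |a b. a \<in> S \<and> b \<in> I}" using assms by force
  then show "x \<in> ideal_pow S I 1" using generator_mem_ideal_gen[OF assms] by simp
qed

lemma mult_mem_ideal_pow_two: "1 \<in> S \<Longrightarrow> a \<in> I \<Longrightarrow> b \<in> I \<Longrightarrow> a * b \<in> ideal_pow S I 2"
  unfolding ideal_pow_two using subset_ideal_pow_one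
  by (blast intro: generator_mem_ideal_gen)

lemma ideal_pow_antimono:
  assumes S: "is_subring S" and I: "I \<subseteq> S" and "k \<le> l"
  shows "ideal_pow S I l \<subseteq> ideal_pow S I k"
proof -
  have "ideal_pow S I (Suc n) \<subseteq> ideal_pow S I n" for n
  proof (induction n)
    case 0
    have "{a * b |a b. a \<in> S \<and> b \<in> I} \<subseteq> S"
      using S I unfolding is_subring_def by blast
    then show ?case using ideal_gen_least[OF is_submodule_subring[OF S]] by simp
  next
    case (Suc n)
    then show ?case by (rule ideal_pow_Suc_mono) simp_all
  qed
  then show ?thesis using lift_Suc_antimono_le[of "ideal_pow S I"] \<open>k \<le> l\<close> by blast
qed

lemma ideal_pow_subset_ideal_pow_Suc:
  assumes "S \<subseteq> T" "is_submodule I S" "I \<subseteq> J" "I \<subseteq> ideal_pow T J 2" "1 \<le> k"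
  shows "ideal_pow S I k \<subseteq> ideal_pow T J (Suc k)"
  using \<open>1 \<le> k\<close>
proof (induction k rule: dec_induct)
  case base
  show ?case using ideal_pow_one_subset[OF assms(2)] assms(4) by (simp add: numeral_2_eq_2)
next
  case (step n)
  from step.IH assms(1,3) show ?case by (rule ideal_pow_Suc_mono)
qed

lemma ideal_pow_two_principal:
  assumes S: "is_subring S"
  shows "ideal_pow S (ideal_gen S {x}) 2 \<subseteq> ideal_gen S {x * x}"
proof -
  have "a * b \<in> ideal_gen S {x * x}" if ab: "a \<in> ideal_gen S {x}" "b \<in> ideal_gen S {x}" for a b
  proof -
    obtain c d where "c \<in> S" "d \<in> S" "a = c * x" "b = d * x"
      using ab unfolding ideal_gen_singleton[OF S] by blast
    moreover from this have "a * b = (c * d) * (x * x)" "c * d \<in> S"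
      using S by (auto simp: is_subring_def ac_simps)
    ultimately show ?thesis unfolding ideal_gen_singleton[OF S] by blast
  qed
  then have "{a * b |a b. a \<in> ideal_pow S (ideal_gen S {x}) 1 \<and> b \<in> ideal_gen S {x}}
      \<subseteq> ideal_gen S {x * x}"
    using ideal_pow_one_subset[OF is_submodule_ideal_gen[OF S]] by blast
  then show ?thesis
    unfolding ideal_pow_two by (rule ideal_gen_least[OF is_submodule_ideal_gen[OF S]])
qed

lemma mono_common_index:
  fixes R :: "nat \<Rightarrow> 'a set"
  assumes "mono R" "a \<in> R i" "b \<in> R j"
  shows "a \<in> R (max i j) \<and> b \<in> R (max i j)"
  using assms(2,3) monoD[OF assms(1) max.cobounded1] monoD[OF assms(1) max.cobounded2] by blast

lemma is_subring_UN:
  fixes R :: "nat \<Rightarrow> 'a::field set"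
  assumes R: "mono R" "\<And>i. is_subring (R i)"
  shows "is_subring (\<Union>i. R i)"
proof -
  have closed: "a + b \<in> (\<Union>i. R i) \<and> a - b \<in> (\<Union>i. R i) \<and> a * b \<in> (\<Union>i. R i)"
    if ab: "a \<in> (\<Union>i. R i)" "b \<in> (\<Union>i. R i)" for a b
  proof -
    obtain i j where "a \<in> R i" "b \<in> R j" using ab by blast
    then have "a \<in> R (max i j) \<and> b \<in> R (max i j)" by (rule mono_common_index[OF R(1)])
    then have "a + b \<in> R (max i j) \<and> a - b \<in> R (max i j) \<and> a * b \<in> R (max i j)"
      using R(2)[of "max i j"] unfolding is_subring_def by blast
    then show ?thesis by blast
  qed
  have "0 \<in> (\<Union>i. R i)" "1 \<in> (\<Union>i. R i)"
    using R(2)[of 0] unfolding is_subring_def by blast+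
  with closed show ?thesis unfolding is_subring_def by blast
qed

lemma is_submodule_UN:
  fixes R M :: "nat \<Rightarrow> 'a::field set"
  assumes R: "mono R" and M: "mono M" "\<And>i. is_submodule (M i) (R i)"
  shows "is_submodule (\<Union>i. M i) (\<Union>i. R i)"
proof -
  have add: "a + b \<in> (\<Union>i. M i)" if ab: "a \<in> (\<Union>i. M i)" "b \<in> (\<Union>i. M i)" for a b
  proof -
    obtain i j where "a \<in> M i" "b \<in> M j" using ab by blast
    then have "a \<in> M (max i j) \<and> b \<in> M (max i j)" by (rule mono_common_index[OF M(1)])
    then have "a + b \<in> M (max i j)" using M(2)[of "max i j"] unfolding is_submodule_def by blast
    then show ?thesis by blast
  qed
  have mult: "s * a \<in> (\<Union>i. M i)" if sa: "s \<in> (\<Union>i. R i)" "a \<in> (\<Union>i. M i)" for s a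
  proof -
    obtain i j where "s \<in> R i" "a \<in> M j" using sa by blast
    then have "s \<in> R (max i j)" "a \<in> M (max i j)"
      using monoD[OF R max.cobounded1] monoD[OF M(1) max.cobounded2] by blast+
    then have "s * a \<in> M (max i j)" using M(2)[of "max i j"] unfolding is_submodule_def by blast
    then show ?thesis by blast
  qed
  have "0 \<in> (\<Union>i. M i)" using M(2)[of 0] unfolding is_submodule_def by blast
  with add mult show ?thesis unfolding is_submodule_def by (intro conjI ballI)
qed


lemma one_notin_prime_ideal:
  assumes "is_prime_ideal q C"
  shows "1 \<notin> q"
proof
  assume "1 \<in> q"
  have "s * 1 \<in> q" if "s \<in> C" for s
    using assms \<open>1 \<in> q\<close> that unfolding is_prime_ideal_def is_ideal_def by blast
  then have "C \<subseteq> q" by auto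
  then show False using assms unfolding is_prime_ideal_def is_ideal_def by blast
qed

lemma subset_localize:
  assumes "is_prime_ideal q C"
  shows "C \<subseteq> localize C q"
proof
  fix c assume "c \<in> C"
  moreover have "1 \<in> C"
    using assms unfolding is_prime_ideal_def is_ideal_def is_subring_def by blast
  moreover have "1 \<notin> q" using assms by (rule one_notin_prime_ideal)
  ultimately show "c \<in> localize C q"
    unfolding localize_def by (intro CollectI exI[of _ c] exI[of _ 1]) simp
qed

lemma inverse_notin_localize:
  assumes q: "is_prime_ideal q C" and x: "x \<in> q" "x \<noteq> 0"
  shows "inverse x \<notin> localize C q"
proof
  assume "inverse x \<in> localize C q"
  then obtain a b where ab: "inverse x = a / b" "a \<in> C" "b \<in> C" "b \<notin> q"
    unfolding localize_def by blast
  have "b \<noteq> 0" using ab(1) x(2) by auto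
  then have "b = a * x" using ab(1) x(2) by (simp add: field_simps)
  moreover have "a * x \<in> q" using q ab(2) x(1) unfolding is_prime_ideal_def is_ideal_def by blast
  ultimately show False using ab(4) by simp
qed

lemma local_quadratic_transformD:
  assumes qt: "local_quadratic_transform A n B" and nA: "n \<subseteq> A" and B: "local_ring B M"
  shows "A \<subseteq> B" "n \<subseteq> M" "\<exists>y\<in>n. y \<noteq> 0 \<and> (\<forall>z\<in>n. z / y \<in> B)"
proof -
  obtain y q where y: "y \<in> n" "y \<notin> ideal_pow A n 2"
    and q: "is_prime_ideal q (subring_gen (A \<union> (\<lambda>x. x / y) ` n))" "n \<subseteq> q"
    and B_eq: "B = localize (subring_gen (A \<union> (\<lambda>x. x / y) ` n)) q"
    using qt unfolding local_quadratic_transform_def by blast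
  have gen_B: "A \<union> (\<lambda>x. x / y) ` n \<subseteq> B"
    using subset_localize[OF q(1)] B_eq unfolding subring_gen_def by blast
  then show "A \<subseteq> B" by blast
  show "n \<subseteq> M"
  proof
    fix z assume z: "z \<in> n"
    show "z \<in> M"
    proof (rule ccontr)
      assume "z \<notin> M"
      moreover have "0 \<in> M" using B unfolding local_ring_def is_ideal_def by blast
      ultimately have "z \<noteq> 0" by auto
      moreover have "inverse z \<in> B"
        using B \<open>z \<notin> M\<close> z nA gen_B unfolding local_ring_def by blast
      ultimately show False
        using inverse_notin_localize[OF q(1)] z q(2) B_eq by blast
    qed
  qed
  have "y \<noteq> 0"
    using y(2) zero_mem_ideal_gen[of A] by (auto simp: ideal_pow_two)
  then show "\<exists>y\<in>n. y \<noteq> 0 \<and> (\<forall>z\<in>n. z / y \<in> B)" using y(1) gen_B by blast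
qed

lemma ideal_pow_div_power_mem:
  assumes T: "is_subring T" and ST: "S \<subseteq> T" and div: "\<forall>z\<in>M. z / y \<in> T"
  shows "z \<in> ideal_pow S M k \<Longrightarrow> z / y ^ k \<in> T"
proof (induction k arbitrary: z)
  case 0
  then show ?case using ST by auto
next
  case (Suc k)
  have "{a * b |a b. a \<in> ideal_pow S M k \<and> b \<in> M} \<subseteq> {z. z * inverse (y ^ Suc k) \<in> T}"
  proof safe
    fix a b assume "a \<in> ideal_pow S M k" "b \<in> M"
    then have "a / y ^ k \<in> T" "b / y \<in> T" using Suc.IH div by auto
    then have "(a / y ^ k) * (b / y) \<in> T" using T unfolding is_subring_def by blast
    moreover have "a * b * inverse (y ^ Suc k) = (a / y ^ k) * (b / y)"
      by (simp add: field_simps)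
    ultimately show "a * b * inverse (y ^ Suc k) \<in> T" by simp
  qed
  then have "ideal_pow S M (Suc k) \<subseteq> {z. z * inverse (y ^ Suc k) \<in> T}"
    unfolding ideal_pow.simps(2) by (rule ideal_gen_least[OF is_submodule_scaled[OF T ST]])
  then show ?case using Suc.prems by (auto simp: divide_inverse)
qed

text \<open>The colon ideals (c^-1 T : y^k) of T form an ascending chain, which stabilizes.\<close>

lemma noetherian_colon_power_stable:
  assumes T: "noetherian T" and y: "y \<in> T"
  shows "\<exists>K. \<forall>z\<in>T. (\<exists>k. z * y ^ k * c \<in> T) \<longrightarrow> z * y ^ K * c \<in> T"
proof -
  have sub: "is_subring T" using T unfolding noetherian_def by blast
  have raise: "z * y ^ K * c \<in> T" if "z * y ^ k * c \<in> T" "k \<le> K" for z k K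
  proof -
    have "y ^ K = y ^ k * y ^ (K - k)" using \<open>k \<le> K\<close> by (simp flip: power_add)
    then have eq: "z * y ^ K * c = (z * y ^ k * c) * y ^ (K - k)" by (simp add: ac_simps)
    show ?thesis
      unfolding eq using that(1) power_mem_subring[OF sub y] sub unfolding is_subring_def by blast

  qed
  define I where "I = {z \<in> T. \<exists>k. z * y ^ k * c \<in> T}"
  have "is_ideal I T"
    unfolding is_ideal_def
  proof (intro conjI ballI)
    show "0 \<in> I" using sub unfolding I_def is_subring_def by auto
  next
    fix a b assume "a \<in> I" "b \<in> I"
    then obtain k l where ab: "a \<in> T" "b \<in> T" "a * y ^ k * c \<in> T" "b * y ^ l * c \<in> T"
      unfolding I_def by blast
    then have "a * y ^ (k + l) * c \<in> T" "b * y ^ (k + l) * c \<in> T"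
      using raise[of a k "k + l"] raise[of b l "k + l"] by simp_all
    moreover have "(a + b) * y ^ (k + l) * c = a * y ^ (k + l) * c + b * y ^ (k + l) * c"
      by (simp add: algebra_simps)
    ultimately have "(a + b) * y ^ (k + l) * c \<in> T" "a + b \<in> T"
      using sub ab(1,2) unfolding is_subring_def by simp_all
    then show "a + b \<in> I" unfolding I_def by blast
  next
    fix s a assume "s \<in> T" "a \<in> I"
    then obtain k where "a \<in> T" "a * y ^ k * c \<in> T" unfolding I_def by blast
    then have "s * (a * y ^ k * c) \<in> T" "s * a \<in> T"
      using \<open>s \<in> T\<close> sub unfolding is_subring_def by simp_all
    then show "s * a \<in> I" unfolding I_def by (auto simp: mult.assoc)

  qed (use sub in \<open>auto simp: I_def\<close>)
  then obtain G where G: "finite G" "I = ideal_gen T G"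
    using T unfolding noetherian_def by blast
  have "G \<subseteq> I"
    using G(2) generator_mem_ideal_gen sub unfolding is_subring_def by blast
  then have "\<forall>g\<in>G. \<exists>k. g * y ^ k * c \<in> T" unfolding I_def by blast
  then obtain k where k: "\<forall>g\<in>G. g * y ^ k g * c \<in> T" by (auto dest: bchoice)

  define K where "K = Max (k ` G)"
  have "G \<subseteq> {z. z * (y ^ K * c) \<in> T}"
  proof
    fix g assume "g \<in> G"
    then have "k g \<le> K" using G(1) unfolding K_def by simp
    then have "g * y ^ K * c \<in> T" using raise k \<open>g \<in> G\<close> by blast
    then show "g \<in> {z. z * (y ^ K * c) \<in> T}" by (simp add: mult.assoc)
  qed
  then have IK: "I \<subseteq> {z. z * (y ^ K * c) \<in> T}"
    unfolding G(2) by (rule ideal_gen_least[OF is_submodule_scaled[OF sub order_refl]])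
  show ?thesis
  proof (intro exI ballI impI)
    fix z assume "z \<in> T" "\<exists>k. z * y ^ k * c \<in> T"
    then have "z \<in> I" unfolding I_def by blast
    then show "z * y ^ K * c \<in> T" using IK by (simp add: mult.assoc subset_eq)
  qed

qed

definition changes_direction :: "(nat \<Rightarrow> 'a::field set) \<Rightarrow> (nat \<Rightarrow> 'a set) \<Rightarrow> nat \<Rightarrow> bool" where
  "changes_direction R m i \<longleftrightarrow> (\<exists>n>i. m i \<subseteq> ideal_pow (R n) (m n) 2)"

locale quadratic_sequence =
  fixes R m :: "nat \<Rightarrow> 'a::field set"
  assumes regular: "\<And>i. regular_local_ring (R i) (m i)"
    and quadratic: "\<And>i. local_quadratic_transform (R i) (m i) (R (Suc i))"
begin

abbreviation S :: "'a set" where "S \<equiv> \<Union>i. R i"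

abbreviation N :: "'a set" where "N \<equiv> \<Union>i. m i"

lemma local_R: "local_ring (R i) (m i)"
  using regular[of i] unfolding regular_local_ring_def by blast

lemma noetherian_R: "noetherian (R i)"
  using regular[of i] unfolding regular_local_ring_def by blast

lemma subring_R: "is_subring (R i)"
  using noetherian_R[of i] unfolding noetherian_def by blast

lemma one_mem_R: "1 \<in> R i"
  using subring_R[of i] unfolding is_subring_def by blast

lemma m_subset_R: "m i \<subseteq> R i"
  using local_R[of i] unfolding local_ring_def is_ideal_def by blast

lemma submodule_m: "is_submodule (m i) (R i)"
  using local_R[of i] unfolding local_ring_def by (blast intro: is_submodule_ideal)

lemma inverse_mem_R: "x \<in> R i \<Longrightarrow> x \<notin> m i \<Longrightarrow> inverse x \<in> R i"
  using local_R[of i] unfolding local_ring_def by blast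

lemma one_notin_m: "1 \<notin> m i"
proof
  assume "1 \<in> m i"
  then have "s * 1 \<in> m i" if "s \<in> R i" for s
    using submodule_m[of i] that unfolding is_submodule_def by blast
  then have "R i \<subseteq> m i" by auto
  then show False using m_subset_R[of i] local_R[of i] unfolding local_ring_def by blast
qed

lemma R_subset_Suc: "R i \<subseteq> R (Suc i)"
  and m_subset_Suc: "m i \<subseteq> m (Suc i)"
  and transform_denominator: "\<exists>y\<in>m i. y \<noteq> 0 \<and> (\<forall>z\<in>m i. z / y \<in> R (Suc i))"
  using local_quadratic_transformD[OF quadratic m_subset_R local_R] by blast+

lemma R_mono: "mono R" and m_mono: "mono m"
  unfolding mono_iff_le_Suc using R_subset_Suc m_subset_Suc by blast+

lemma R_le: "i \<le> j \<Longrightarrow> R i \<subseteq> R j" and m_le: "i \<le> j \<Longrightarrow> m i \<subseteq> m j"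
  using monoD[OF R_mono] monoD[OF m_mono] by blast+

lemma ideal_pow_subset_R: "ideal_pow (R i) (m i) k \<subseteq> R i"
  using ideal_pow_antimono[OF subring_R m_subset_R, of 0 k] by simp

lemma ideal_pow_le: "i \<le> j \<Longrightarrow> ideal_pow (R i) (m i) k \<subseteq> ideal_pow (R j) (m j) k"
  by (rule ideal_pow_mono) (simp_all add: R_le m_le)

lemma subring_S: "is_subring S"
  using is_subring_UN[OF R_mono subring_R] .

lemma submodule_N: "is_submodule N S"
  using is_submodule_UN[OF R_mono m_mono submodule_m] .

lemma N_subset_S: "N \<subseteq> S"
  using m_subset_R by blast

lemma one_notin_N: "1 \<notin> N"
  using one_notin_m by blast

text \<open>With m_i R_(i+1) = y R_(i+1), a nonzero x in every
  m_i^k is divisible in R_(i+1) by every power of y; stabilization of the colon ideals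
  (x R_(i+1) : y^k) then puts 1/y into R_(i+1), although y lies in its maximal ideal.\<close>

lemma mem_all_ideal_pow_imp_zero:
  assumes x: "\<And>k. x \<in> ideal_pow (R i) (m i) k"
  shows "x = 0"
proof (rule ccontr)
  assume "x \<noteq> 0"
  obtain y where y: "y \<in> m i" "y \<noteq> 0" "\<forall>z\<in>m i. z / y \<in> R (Suc i)"
    using transform_denominator by blast
  have y_m: "y \<in> m (Suc i)" using y(1) m_subset_Suc by blast
  then have "y \<in> R (Suc i)" using m_subset_R by blast
  then obtain K where K: "\<forall>z\<in>R (Suc i). (\<exists>k. z * y ^ k * inverse x \<in> R (Suc i))
      \<longrightarrow> z * y ^ K * inverse x \<in> R (Suc i)"
    using noetherian_colon_power_stable[OF noetherian_R] by blast
  have "x / y ^ Suc K \<in> R (Suc i)"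
    using ideal_pow_div_power_mem[OF subring_R R_subset_Suc y(3) x] .
  moreover have "x / y ^ Suc K * y ^ Suc K * inverse x = 1"
    using \<open>x \<noteq> 0\<close> y(2) by simp
  ultimately have "x / y ^ Suc K * y ^ K * inverse x \<in> R (Suc i)"
    using K one_mem_R by metis
  moreover have "x / y ^ Suc K * y ^ K * inverse x = inverse y"
    using \<open>x \<noteq> 0\<close> y(2) by (simp add: field_simps)
  ultimately have "inverse y * y \<in> m (Suc i)"
    using y_m submodule_m unfolding is_submodule_def by simp
  then show False using y(2) one_notin_m by simp
qed

lemma le_ord_val_iff:
  assumes "x \<in> R i" "x \<noteq> 0"
  shows "k \<le> ord_val (R i) (m i) x \<longleftrightarrow> x \<in> ideal_pow (R i) (m i) k"
proof -
  let ?P = "\<lambda>k. x \<in> ideal_pow (R i) (m i) k"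
  have down: "?P k" if "?P l" "k \<le> l" for k l
    using that ideal_pow_antimono[OF subring_R m_subset_R] by blast
  obtain B where B: "\<forall>k. ?P k \<longrightarrow> k \<le> B"
  proof (rule ccontr)
    assume "\<not> thesis"
    then have "\<forall>B. \<exists>k. ?P k \<and> B < k" using that by (meson not_le)
    then have "?P k" for k using down by (meson less_imp_le)
    then show False using mem_all_ideal_pow_imp_zero \<open>x \<noteq> 0\<close> by blast
  qed
  have "?P 0" using assms(1) by simp
  then have "?P (ord_val (R i) (m i) x)"
    unfolding ord_val_def using GreatestI_nat[of ?P 0 B] B by blast

  then show ?thesis
    using down B unfolding ord_val_def by (metis Greatest_le_nat)
qed

lemma square_eq_if_infinitely_many_changes:
  assumes "infinite {i. changes_direction R m i}"
  shows "N = ideal_pow S N 2"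
proof
  show "N \<subseteq> ideal_pow S N 2"
  proof
    fix z assume "z \<in> N"
    then obtain j where "z \<in> m j" by blast
    obtain i n where "j \<le> i" "i < n" "m i \<subseteq> ideal_pow (R n) (m n) 2"
      using assms unfolding infinite_nat_iff_unbounded_le changes_direction_def by blast
    then have "z \<in> ideal_pow (R n) (m n) 2" using \<open>z \<in> m j\<close> m_le by blast
    then show "z \<in> ideal_pow S N 2" using ideal_pow_mono[of "R n" S "m n" N] by blast
  qed
  show "ideal_pow S N 2 \<subseteq> N"
    using ideal_pow_antimono[OF subring_S N_subset_S, of 1 2] ideal_pow_one_subset[OF submodule_N]
    by simp
qed

lemma notin_square_if_no_change:
  assumes "\<not> changes_direction R m i" and y: "y \<in> m i" "y \<noteq> 0" "\<forall>z\<in>m i. z / y \<in> R (Suc i)"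
    and "i < n"
  shows "y \<notin> ideal_pow (R n) (m n) 2"
proof
  assume y2: "y \<in> ideal_pow (R n) (m n) 2"
  have "m i \<subseteq> ideal_pow (R n) (m n) 2"
  proof
    fix z assume "z \<in> m i"
    then have "z / y \<in> R n" using y(3) R_le[of "Suc i" n] \<open>i < n\<close> by auto
    then have "z / y * y \<in> ideal_pow (R n) (m n) 2"
      using is_submodule_ideal_pow[OF subring_R] y2 unfolding is_submodule_def by blast
    then show "z \<in> ideal_pow (R n) (m n) 2" using y(2) by simp
  qed
  then show False using assms(1) \<open>i < n\<close> unfolding changes_direction_def by blast
qed

lemma order_one_element_if_finitely_many_changes:
  assumes "finite {i. changes_direction R m i}"
  obtains x i0 where "x \<in> m i0" "x \<noteq> 0" "\<And>n. i0 < n \<Longrightarrow> x \<notin> ideal_pow (R n) (m n) 2"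
proof -
  obtain i0 where "\<not> changes_direction R m i0"
    using ex_new_if_finite[OF infinite_UNIV_nat assms] by blast
  moreover obtain y where "y \<in> m i0" "y \<noteq> 0" "\<forall>z\<in>m i0. z / y \<in> R (Suc i0)"
    using transform_denominator by blast
  ultimately show thesis using that notin_square_if_no_change by blast
qed

lemma principal_if_order_one:
  assumes x: "x \<in> m i0" "x \<noteq> 0" and notin: "\<And>n. i0 < n \<Longrightarrow> x \<notin> ideal_pow (R n) (m n) 2"
  shows "N = ideal_gen S {x}"
proof
  show "ideal_gen S {x} \<subseteq> N"
    by (rule ideal_gen_least[OF submodule_N]) (use x(1) in blast)
  show "N \<subseteq> ideal_gen S {x}"
  proof
    fix z assume "z \<in> N"
    then obtain j where "z \<in> m j" by blast
    define n where "n = max j i0"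
    have "j \<le> n" "i0 \<le> n" unfolding n_def by simp_all
    then have zn: "z \<in> m n" and xn: "x \<in> m n" using \<open>z \<in> m j\<close> x(1) m_le by blast+
    obtain y where y: "y \<in> m n" "y \<noteq> 0" "\<forall>w\<in>m n. w / y \<in> R (Suc n)"
      using transform_denominator by blast
    have unit: "x / y \<notin> m (Suc n)"
    proof
      assume "x / y \<in> m (Suc n)"
      moreover have "y \<in> m (Suc n)" using y(1) m_subset_Suc by blast
      ultimately have "y * (x / y) \<in> ideal_pow (R (Suc n)) (m (Suc n)) 2"
        by (intro mult_mem_ideal_pow_two[OF one_mem_R])
      then show False using notin[of "Suc n"] y(2) unfolding n_def by simp
    qed
    have "x / y \<in> R (Suc n)" using y(3) xn by blast
    then have "inverse (x / y) \<in> R (Suc n)" using unit by (rule inverse_mem_R)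
    moreover have "z / y \<in> R (Suc n)" using y(3) zn by blast
    ultimately have "z / y * inverse (x / y) \<in> R (Suc n)"
      using subring_R[of "Suc n"] unfolding is_subring_def by blast
    moreover have "z / y * inverse (x / y) = z / x" using y(2) by simp
    ultimately have "z / x \<in> R (Suc n)" by argo
    then have "z / x \<in> S" by blast
    then show "z \<in> ideal_gen S {x}"
      unfolding ideal_gen_singleton[OF subring_S] using x(2) by (intro CollectI exI[of _ "z / x"]) simp
  qed
qed

lemma square_neq_if_principal:
  assumes "x \<in> S" "N = ideal_gen S {x}"
  shows "N \<noteq> ideal_pow S N 2"
proof
  assume square: "N = ideal_pow S N 2"
  have "1 \<in> S" using one_mem_R by blast
  then have "x \<in> N" unfolding assms(2) by (rule generator_mem_ideal_gen) simp
  then have "x \<in> ideal_pow S N 2" unfolding square[symmetric] .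
  moreover have "ideal_pow S N 2 \<subseteq> ideal_gen S {x * x}"
    using ideal_pow_two_principal[OF subring_S, of x] assms(2) by simp
  ultimately have "x \<in> ideal_gen S {x * x}" by blast

  then obtain c where c: "c \<in> S" "x = c * (x * x)"
    unfolding ideal_gen_singleton[OF subring_S] by blast
  obtain y where "y \<in> m 0" "y \<noteq> 0" using transform_denominator by blast
  then have "x \<noteq> 0" using assms(2) unfolding ideal_gen_singleton[OF subring_S] by auto
  then have "c * x = 1" using c(2) by (simp add: field_simps)
  moreover have "c * x \<in> N" using submodule_N c(1) \<open>x \<in> N\<close> unfolding is_submodule_def by blast
  ultimately show False using one_notin_N by simp
qed

lemma ord_val_unbounded_if_infinitely_many_changes:
  assumes changes: "infinite {i. changes_direction R m i}" and x: "x \<in> N" "x \<noteq> 0"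
  shows "\<exists>i0. \<forall>i\<ge>i0. n < ord_val (R i) (m i) x"
proof -
  obtain j where "x \<in> m j" using x(1) by blast
  have "\<exists>i. x \<in> ideal_pow (R i) (m i) (Suc k)" for k
  proof (induction k)
    case 0
    show ?case using \<open>x \<in> m j\<close> subset_ideal_pow_one[OF one_mem_R] by auto
  next
    case (Suc k)
    then obtain i where "x \<in> ideal_pow (R i) (m i) (Suc k)" by blast
    moreover obtain i' n where "i \<le> i'" "i' < n" "m i' \<subseteq> ideal_pow (R n) (m n) 2"
      using changes unfolding infinite_nat_iff_unbounded_le changes_direction_def by blast
    moreover have "ideal_pow (R i') (m i') (Suc k) \<subseteq> ideal_pow (R n) (m n) (Suc (Suc k))"
      using calculation(3,4) R_le[of i' n] m_le[of i' n]
      by (intro ideal_pow_subset_ideal_pow_Suc submodule_m) auto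
    ultimately show ?case using ideal_pow_le[of i i' "Suc k"] by blast

  qed
  then obtain i0 where i0: "x \<in> ideal_pow (R i0) (m i0) (Suc n)" by blast
  have "n < ord_val (R i) (m i) x" if "i0 \<le> i" for i
  proof -
    have "x \<in> ideal_pow (R i) (m i) (Suc n)" using i0 ideal_pow_le[OF that] by blast
    moreover from this have "x \<in> R i" using ideal_pow_subset_R by blast
    ultimately have "Suc n \<le> ord_val (R i) (m i) x" using le_ord_val_iff x(2) by blast
    then show ?thesis by simp
  qed
  then show ?thesis by blast
qed

lemma principal_if_finitely_many_changes:
  assumes "finite {i. changes_direction R m i}"
  shows "\<exists>x\<in>S. N = ideal_gen S {x}"
proof -
  obtain x i0 where x: "x \<in> m i0" "x \<noteq> 0" "\<And>n. i0 < n \<Longrightarrow> x \<notin> ideal_pow (R n) (m n) 2"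
    using order_one_element_if_finitely_many_changes[OF assms] by blast
  then have "N = ideal_gen S {x}" by (rule principal_if_order_one)
  moreover have "x \<in> S" using x(1) m_subset_R by blast
  ultimately show ?thesis by blast
qed

lemma ord_val_bounded_if_finitely_many_changes:
  assumes "finite {i. changes_direction R m i}"
  shows "\<exists>x\<in>N. x \<noteq> 0 \<and> \<not> (\<exists>i0. \<forall>i\<ge>i0. 1 < ord_val (R i) (m i) x)"
proof -
  obtain x i0 where x: "x \<in> m i0" "x \<noteq> 0" "\<And>n. i0 < n \<Longrightarrow> x \<notin> ideal_pow (R n) (m n) 2"
    using order_one_element_if_finitely_many_changes[OF assms] by blast
  have "ord_val (R i) (m i) x \<le> 1" if "i0 < i" for i
  proof -
    have "x \<in> R i" using x(1) m_le[of i0 i] m_subset_R \<open>i0 < i\<close> by auto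
    then show ?thesis using le_ord_val_iff[of x i 2] x(2,3) that by simp
  qed
  then have "\<not> (\<forall>i\<ge>i0'. 1 < ord_val (R i) (m i) x)" for i0'
    by (metis le_SucE linorder_not_le max.cobounded1 max.cobounded2 le_imp_less_Suc)
  moreover have "x \<in> N" using x(1) by blast
  ultimately show ?thesis using x(2) by blast
qed

end

theorem proposition3p5:
  fixes R m :: "nat \<Rightarrow> 'a::field set"
  assumes reg: "\<And>i. regular_local_ring (R i) (m i)"
    and dim2: "\<And>i. has_prime_chain (R i) 2"
    and qt: "\<And>i. local_quadratic_transform (R i) (m i) (R (Suc i))"
    and strict: "\<And>i. R i \<subset> R (Suc i)"
  defines "S \<equiv> (\<Union>i. R i)"
    and "N \<equiv> (\<Union>i. m i)"
  shows "((\<not> (\<exists>x\<in>S. N = ideal_gen S {x})) \<longleftrightarrow> N = ideal_pow S N 2)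
       \<and> (N = ideal_pow S N 2 \<longleftrightarrow>
            infinite {i. \<exists>n>i. m i \<subseteq> ideal_pow (R n) (m n) 2})
       \<and> (infinite {i. \<exists>n>i. m i \<subseteq> ideal_pow (R n) (m n) 2} \<longleftrightarrow>
            (\<forall>x\<in>N. x \<noteq> 0 \<longrightarrow> (\<forall>n>0. \<exists>i0. \<forall>i\<ge>i0. n < ord_val (R i) (m i) x)))"
proof -
  interpret quadratic_sequence R m using reg qt by unfold_locales
  have changes: "{i. \<exists>n>i. m i \<subseteq> ideal_pow (R n) (m n) 2} = {i. changes_direction R m i}"
    unfolding changes_direction_def ..
  let ?C = "infinite {i. changes_direction R m i}"
  have "\<not> ?C \<Longrightarrow> \<exists>x\<in>S. N = ideal_gen S {x}"
    unfolding S_def N_def by (intro principal_if_finitely_many_changes) simp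

  moreover have "?C \<Longrightarrow> N = ideal_pow S N 2"
    unfolding S_def N_def by (rule square_eq_if_infinitely_many_changes)
  moreover have "(\<exists>x\<in>S. N = ideal_gen S {x}) \<Longrightarrow> N \<noteq> ideal_pow S N 2"
    unfolding S_def N_def by (elim bexE square_neq_if_principal)
  moreover have "?C \<Longrightarrow> \<forall>x\<in>N. x \<noteq> 0 \<longrightarrow> (\<forall>n>0. \<exists>i0. \<forall>i\<ge>i0. n < ord_val (R i) (m i) x)"
    unfolding N_def using ord_val_unbounded_if_infinitely_many_changes by blast
  moreover have "\<not> ?C \<Longrightarrow> \<not> (\<forall>x\<in>N. x \<noteq> 0 \<longrightarrow> (\<forall>n>0. \<exists>i0. \<forall>i\<ge>i0. n < ord_val (R i) (m i) x))"
    unfolding N_def using ord_val_bounded_if_finitely_many_changes zero_less_one by blast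
  ultimately show ?thesis unfolding changes by argo
qed

end
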